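(* Let $G=\langle S_k\mid K\rangle$ be a finitely generated semigroup as described in the context, with $K$ primitive, and let $\lambda$ be the largest (Perron) eigenvalue of $K$. For $m\ge0$ and $1\le i,j\le k$: (i) the limit $\lim_{n\to\infty}|\bar{\Delta}^{(s_j)}_n|/|\bar{\Delta}^{(s_i)}_{n+m+1}|$ exists and is positive, and $\sum_{l=1}^k\lim_{n\to\infty}K^{m+1}(s_i,s_l)|\bar{\Delta}^{(s_l)}_n|/|\bar{\Delta}^{(s_i)}_{n+m+1}|=1$; (ii) there exists $\gamma>0$ such that for all $r\ge0$, \[\lim_{q\to\infty}\frac{\sum_{l=0}^{q-1}K^{r+l(m+1)+1}(s_i,s_j)}{|\bar{\Delta}^{(s_i)}_{q(m+1)+r}|}=\frac{\gamma}{\lambda^{m+1}-1};\] (iii) for all $r\ge0$, \[\sum_{j=1}^k\lim_{q\to\infty}\frac{\sum_{l=0}^{q-1}K^{r+l(m+1)+1}(s_i,s_j)\,|\bar{\Delta}^{(s_j)}_m|}{|\bar{\Delta}^{(s_i)}_{q(m+1)+r}|}=1.\]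
   Context: Let $K$ be a $k\times k$ matrix with entries in $\{0,1\}$ indexed by $S_k=\{s_1,\dots,s_k\}$, and let $G=\langle S_k\mid K\rangle$ be the semigroup generated by $S_k$ subject to the relations $s_is_j=1_G$ if and only if $K(s_i,s_j)=0$ ($1_G$ the identity). Every $g\in G$ has a unique minimal representation $g=g_1g_2\cdots g_n$ with $g_l\in S_k$ and $K(g_l,g_{l+1})=1$; its length is $|g|=n$ (with $|1_G|=0$). For $g\in G$ and $n\ge0$ the $n$-semiball at $g$ is $\bar{\Delta}^{(g)}_n=\{gh: h\in G,\ |h|\le n,\ |gh|=|g|+|h|\}$. $K^l(s_i,s_j)$ is the $(s_i,s_j)$ entry of $K^l$. A nonnegative square matrix is primitive if some power of it has all entries positive. *)

theory Defs
  imports Complex_Main "Jordan_Normal_Form.Char_Poly"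
begin

text \<open>Generators s_1,...,s_k are represented by indices 0,...,k-1; the k x k
  0/1 matrix K is a real matrix. Elements of G are identified with their unique
  minimal representations, i.e. K-admissible words.\<close>

definition admissible :: "real mat \<Rightarrow> nat list \<Rightarrow> bool" where
  "admissible K w \<longleftrightarrow> set w \<subseteq> {0..<dim_row K} \<and>
     (\<forall>l. Suc l < length w \<longrightarrow> K $$ (w ! l, w ! Suc l) = 1)"

text \<open>Length |g| of an element is the length of its minimal representation.
  The n-semiball at g: all gh with |h| \<le> n and |gh| = |g| + |h|, i.e. whose
  minimal representation is the concatenation of those of g and h.\<close>

definition semiball :: "real mat \<Rightarrow> nat list \<Rightarrow> nat \<Rightarrow> nat list set" where
  "semiball K g n = {g @ h | h. length h \<le> n \<and> admissible K (g @ h)}"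

definition primitive_mat :: "real mat \<Rightarrow> bool" where
  "primitive_mat A \<longleftrightarrow> (\<forall>i<dim_row A. \<forall>j<dim_col A. A $$ (i,j) \<ge> 0) \<and>
     (\<exists>p. \<forall>i<dim_row A. \<forall>j<dim_col A. (A ^\<^sub>m p) $$ (i,j) > 0)"

definition perron_eigenvalue :: "real mat \<Rightarrow> real" where
  "perron_eigenvalue A = Max {x. eigenvalue A x}"

end

theory Submission
  imports Defs
begin

(* Elements of the n-semiball at s_i are the walks of length at most n from i in the graph
  with adjacency matrix K, so its size is the i-th row sum of K^0 + ... + K^n.
  For a primitive nonnegative matrix A the ratios (A^n x)_i / (A^n y)_i, y > 0, converge to a
  limit independent of i: after p steps every row of A^p dominates a fixed multiple of a common
  probability vector (Doeblin), so the spread of the ratios contracts geometrically. Taking unit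
  vectors gives the row-normalised and column-normalised limits a and b of A^n; they are
  nonnegative left and right eigenvectors for the growth rate rho of the row sums, and since a is
  positive, rho dominates every real eigenvalue, so rho is the Perron eigenvalue. For a 0/1
  matrix with k >= 2, rho > 1. Then the total mass of A^n grows like rho^n, each semiball size
  is asymptotic to b_i rho / (rho - 1) times it, and the three limits are read off from linear
  recurrences whose coefficients tend to powers of 1 / rho. *)

section \<open>Matrix powers and walks\<close>

lemma pow_mat_Suc_left:
  assumes "A \<in> carrier_mat n n"
  shows "A ^\<^sub>m Suc p = A * A ^\<^sub>m p"
proof (induction p)
  case 0
  show ?case using assms by simp
next
  case (Suc p)
  have "A ^\<^sub>m Suc (Suc p) = (A * A ^\<^sub>m p) * A" using Suc by simp
  also have "\<dots> = A * A ^\<^sub>m Suc p"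
    using assms by (simp add: assoc_mult_mat[of _ n n _ n _ n])
  finally show ?case .
qed

lemma pow_mat_add:
  assumes "A \<in> carrier_mat n n"
  shows "A ^\<^sub>m (p + q) = A ^\<^sub>m p * A ^\<^sub>m q"
proof (induction q)
  case 0
  show ?case using assms by simp
next
  case (Suc q)
  have "A ^\<^sub>m (p + Suc q) = (A ^\<^sub>m p * A ^\<^sub>m q) * A" using Suc by simp
  also have "\<dots> = A ^\<^sub>m p * A ^\<^sub>m Suc q"
    using assms by (simp add: assoc_mult_mat[of _ n n _ n _ n])
  finally show ?case .
qed

lemma transpose_pow_mat:
  fixes A :: "'a :: comm_semiring_1 mat"
  assumes "A \<in> carrier_mat n n"
  shows "transpose_mat (A ^\<^sub>m p) = transpose_mat A ^\<^sub>m p"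
proof (induction p)
  case 0
  show ?case using assms by simp
next
  case (Suc p)
  have "transpose_mat (A ^\<^sub>m Suc p) = transpose_mat A * transpose_mat (A ^\<^sub>m p)"
    using transpose_mult[OF pow_carrier_mat[OF assms] assms] by simp
  then show ?case using Suc pow_mat_Suc_left[of "transpose_mat A" n p] assms by simp
qed

lemma index_mult_mat_sum:
  assumes "A \<in> carrier_mat n m" "B \<in> carrier_mat m l" "i < n" "j < l"
  shows "(A * B) $$ (i, j) = (\<Sum>c<m. A $$ (i, c) * B $$ (c, j))"
  using assms by (auto simp: scalar_prod_def lessThan_atLeast0 intro!: sum.cong)

lemma index_mult_mat_vec_sum:
  assumes "A \<in> carrier_mat n m" "dim_vec v = m" "i < n"
  shows "(A *\<^sub>v v) $ i = (\<Sum>j<m. A $$ (i, j) * v $ j)"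
  using assms by (auto simp: scalar_prod_def lessThan_atLeast0 intro!: sum.cong)

lemma sum_in_Nats: "(\<And>x. x \<in> S \<Longrightarrow> f x \<in> \<nat>) \<Longrightarrow> sum f S \<in> \<nat>"
  by (induction S rule: infinite_finite_induct) auto

lemma pow_mat_entries_Nats:
  assumes "A \<in> carrier_mat n n" "\<forall>i<n. \<forall>j<n. A $$ (i, j) \<in> \<nat>"
    and "i < n" "j < n"
  shows "(A ^\<^sub>m p) $$ (i, j) \<in> (\<nat> :: 'a :: semiring_1 set)"
  using assms(3,4)
proof (induction p arbitrary: j)
  case 0
  then show ?case using assms(1) by simp
next
  case (Suc p)
  have "(\<Sum>c<n. (A ^\<^sub>m p) $$ (i, c) * A $$ (c, j)) \<in> \<nat>"
    using Suc assms(2) by (auto intro!: sum_in_Nats Nats_mult)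
  then show ?case
    using Suc.prems by (simp add: index_mult_mat_sum[OF pow_carrier_mat[OF assms(1)] assms(1)]
        del: index_mult_mat)
qed

lemma admissible_Cons_Cons:
  "admissible K (a # b # w) \<longleftrightarrow> a < dim_row K \<and> K $$ (a, b) = 1 \<and> admissible K (b # w)"
proof -
  have split: "(\<forall>l. Q l) \<longleftrightarrow> Q 0 \<and> (\<forall>l. Q (Suc l))" for Q :: "nat \<Rightarrow> bool"
    by (metis not0_implies_Suc)
  show ?thesis unfolding admissible_def by (subst split) auto
qed

definition walks :: "real mat \<Rightarrow> nat \<Rightarrow> nat \<Rightarrow> nat \<Rightarrow> nat list set" where
  "walks K t a b = {h. length h = t \<and> admissible K (a # h) \<and> last (a # h) = b}"

lemma finite_walks:
  assumes "K \<in> carrier_mat k k"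
  shows "finite (walks K t a b)"
proof (rule finite_subset)
  show "walks K t a b \<subseteq> {h. set h \<subseteq> {..<k} \<and> length h = t}"
    using assms by (auto simp: walks_def admissible_def)
qed (rule finite_lists_length_eq, simp)

lemma walks_Suc:
  assumes "K \<in> carrier_mat k k" "a < k"
  shows "walks K (Suc t) a b = (\<Union>c\<in>{c \<in> {..<k}. K $$ (a, c) = 1}. (#) c ` walks K t c b)"
proof (intro equalityI subsetI)
  fix h assume "h \<in> walks K (Suc t) a b"
  then obtain c h' where h: "h = c # h'" and "length h' = t" "admissible K (a # c # h')"
    "last (c # h') = b"
    by (auto simp: walks_def length_Suc_conv)
  then have "c \<in> {c \<in> {..<k}. K $$ (a, c) = 1}" "h' \<in> walks K t c b"
    using assms by (auto simp: walks_def admissible_Cons_Cons admissible_def)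
  then show "h \<in> (\<Union>c\<in>{c \<in> {..<k}. K $$ (a, c) = 1}. (#) c ` walks K t c b)"
    using h by blast
qed (use assms in \<open>auto simp: walks_def admissible_Cons_Cons\<close>)

lemma card_walks:
  assumes K: "K \<in> carrier_mat k k" and K01: "\<forall>a<k. \<forall>b<k. K $$ (a, b) \<in> {0, 1}"
    and "a < k" "b < k"
  shows "real (card (walks K t a b)) = (K ^\<^sub>m t) $$ (a, b)"
  using assms(3)
proof (induction t arbitrary: a)
  case 0
  then show ?case using assms by (auto simp: walks_def admissible_def)
next
  case (Suc t)
  define S where "S = {c \<in> {..<k}. K $$ (a, c) = 1}"
  have "card (walks K (Suc t) a b) = (\<Sum>c\<in>S. card ((#) c ` walks K t c b))"
    unfolding walks_Suc[OF K Suc.prems] S_def[symmetric]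
    by (rule card_UN_disjoint) (auto simp: S_def finite_walks[OF K])
  then have "real (card (walks K (Suc t) a b)) = (\<Sum>c\<in>S. (K ^\<^sub>m t) $$ (c, b))"
    using Suc.IH by (simp add: S_def card_image)
  also have "\<dots> = (\<Sum>c<k. if K $$ (a, c) = 1 then (K ^\<^sub>m t) $$ (c, b) else 0)"
    unfolding S_def by (rule sum.inter_filter) simp
  also have "\<dots> = (\<Sum>c<k. K $$ (a, c) * (K ^\<^sub>m t) $$ (c, b))"
    using K01 Suc.prems by (intro sum.cong) auto
  also have "\<dots> = (K * K ^\<^sub>m t) $$ (a, b)"
    using Suc.prems assms(4) by (rule index_mult_mat_sum[OF K pow_carrier_mat[OF K], symmetric])
  also have "\<dots> = (K ^\<^sub>m Suc t) $$ (a, b)"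
    by (simp only: pow_mat_Suc_left[OF K])
  finally show ?case .
qed

lemma card_semiball:
  assumes K: "K \<in> carrier_mat k k" and K01: "\<forall>a<k. \<forall>b<k. K $$ (a, b) \<in> {0, 1}"
    and "a < k"
  shows "real (card (semiball K [a] n)) = (\<Sum>t\<le>n. \<Sum>b<k. (K ^\<^sub>m t) $$ (a, b))"
proof -
  let ?I = "{..n} \<times> {..<k}"
  have "semiball K [a] n = (#) a ` (\<Union>(t, b)\<in>?I. walks K t a b)"
  proof (intro equalityI subsetI)
    fix w assume "w \<in> semiball K [a] n"
    then obtain h where w: "w = a # h" and h: "length h \<le> n" "admissible K (a # h)"
      by (auto simp: semiball_def)
    have "last (a # h) < k"
      using h(2) K last_in_set[of "a # h"] by (auto simp: admissible_def)
    then have "h \<in> (\<Union>(t, b)\<in>?I. walks K t a b)"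
      using h by (auto simp: walks_def)
    then show "w \<in> (#) a ` (\<Union>(t, b)\<in>?I. walks K t a b)" using w by blast
  qed (auto simp: semiball_def walks_def)
  moreover have "card (\<Union>(t, b)\<in>?I. walks K t a b) = (\<Sum>x\<in>?I. card ((\<lambda>(t, b). walks K t a b) x))"
    using finite_walks[OF K] by (intro card_UN_disjoint) (auto simp: walks_def)
  ultimately have "card (semiball K [a] n) = (\<Sum>(t, b)\<in>?I. card (walks K t a b))"
    by (simp add: card_image case_prod_unfold)
  then have "real (card (semiball K [a] n)) = (\<Sum>(t, b)\<in>?I. (K ^\<^sub>m t) $$ (a, b))"
    using card_walks[OF K K01 assms(3)] by (auto simp: case_prod_unfold intro!: sum.cong)
  then show ?thesis by (simp add: sum.cartesian_product)
qed

section \<open>Averages and limits\<close>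

lemma convex_comb_le:
  fixes w v r :: "'i \<Rightarrow> real"
  assumes "\<And>l. l \<in> I \<Longrightarrow> \<delta> * v l \<le> w l" "\<And>l. l \<in> I \<Longrightarrow> r l \<le> M"
    and "sum w I = 1" "sum v I = 1"
  shows "(\<Sum>l\<in>I. w l * r l) \<le> (1 - \<delta>) * M + \<delta> * (\<Sum>l\<in>I. v l * r l)"
proof -
  have "(\<Sum>l\<in>I. w l * r l) = (\<Sum>l\<in>I. (w l - \<delta> * v l) * r l) + \<delta> * (\<Sum>l\<in>I. v l * r l)"
    by (simp add: algebra_simps sum.distrib sum_distrib_left sum_subtractf)
  also have "(\<Sum>l\<in>I. (w l - \<delta> * v l) * r l) \<le> (\<Sum>l\<in>I. (w l - \<delta> * v l) * M)"
    using assms(1,2) by (intro sum_mono mult_left_mono) auto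
  finally show ?thesis using assms(3,4)
    by (simp add: sum_distrib_right[symmetric] sum_subtractf sum_distrib_left[symmetric])
qed

lemma convex_comb_ge:
  fixes w v r :: "'i \<Rightarrow> real"
  assumes "\<And>l. l \<in> I \<Longrightarrow> \<delta> * v l \<le> w l" "\<And>l. l \<in> I \<Longrightarrow> m \<le> r l"
    and "sum w I = 1" "sum v I = 1"
  shows "(1 - \<delta>) * m + \<delta> * (\<Sum>l\<in>I. v l * r l) \<le> (\<Sum>l\<in>I. w l * r l)"
  using convex_comb_le[of I \<delta> v w "\<lambda>l. - r l" "- m"] assms by (simp add: sum_negf)

lemma tendsto_zero_contraction:
  fixes e u :: "nat \<Rightarrow> real"
  assumes rec: "\<forall>\<^sub>F n in sequentially. \<bar>e (Suc n)\<bar> \<le> \<theta> * \<bar>e n\<bar> + u n"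
    and \<theta>: "0 \<le> \<theta>" "\<theta> < 1" and u: "u \<longlonglongrightarrow> 0"
  shows "e \<longlonglongrightarrow> 0"
proof (rule LIMSEQ_I)
  fix \<epsilon> :: real assume "0 < \<epsilon>"
  then have "\<forall>\<^sub>F n in sequentially. u n < (1 - \<theta>) * \<epsilon> / 2"
    using \<theta> u by (intro order_tendstoD(2)) auto
  with rec obtain N where N: "\<And>n. N \<le> n \<Longrightarrow>
      \<bar>e (Suc n)\<bar> \<le> \<theta> * \<bar>e n\<bar> + u n \<and> u n < (1 - \<theta>) * \<epsilon> / 2"
    unfolding eventually_sequentially by (metis (no_types, lifting) eventually_conj eventually_sequentially)
  have bound: "\<bar>e n\<bar> \<le> \<epsilon> / 2 + \<theta> ^ (n - N) * \<bar>e N\<bar>" if "N \<le> n" for n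
    using that
  proof (induction n rule: dec_induct)
    case base
    show ?case using \<open>0 < \<epsilon>\<close> by simp
  next
    case (step n)
    have "\<bar>e (Suc n)\<bar> \<le> \<theta> * (\<epsilon> / 2 + \<theta> ^ (n - N) * \<bar>e N\<bar>) + (1 - \<theta>) * \<epsilon> / 2"
      using N[OF step.hyps(1)] mult_left_mono[OF step.IH \<theta>(1)] by linarith
    also have "\<dots> = \<epsilon> / 2 + \<theta> ^ (Suc n - N) * \<bar>e N\<bar>"
      using step.hyps(1) by (simp add: Suc_diff_le field_simps)
    finally show ?case .
  qed
  have "(\<lambda>n. \<theta> ^ (n - N) * \<bar>e N\<bar>) \<longlonglongrightarrow> 0"
    by (rule LIMSEQ_offset[where k = N]) (use \<theta> in \<open>auto intro!: tendsto_mult_left_zero LIMSEQ_power_zero\<close>)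
  then have "\<forall>\<^sub>F n in sequentially. \<theta> ^ (n - N) * \<bar>e N\<bar> < \<epsilon> / 2"
    using \<open>0 < \<epsilon>\<close> by (intro order_tendstoD(2)) auto
  then obtain M where M: "\<And>n. M \<le> n \<Longrightarrow> \<theta> ^ (n - N) * \<bar>e N\<bar> < \<epsilon> / 2"
    unfolding eventually_sequentially by blast
  show "\<exists>no. \<forall>n\<ge>no. norm (e n - 0) < \<epsilon>"
  proof (intro exI allI impI)
    fix n assume "max N M \<le> n"
    then show "norm (e n - 0) < \<epsilon>" using bound[of n] M[of n] by simp
  qed
qed

lemma tendsto_linear_recurrence:
  fixes s \<alpha> \<beta> :: "nat \<Rightarrow> real"
  assumes rec: "\<And>n. s (Suc n) = \<alpha> n * s n + \<beta> n"
    and \<alpha>: "\<alpha> \<longlonglongrightarrow> a" and \<beta>: "\<beta> \<longlonglongrightarrow> b" and a: "\<bar>a\<bar> < 1"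
  shows "s \<longlonglongrightarrow> b / (1 - a)"
proof -
  define L where "L = b / (1 - a)"
  define \<theta> where "\<theta> = (1 + \<bar>a\<bar>) / 2"
  have L: "a * L + b = L" using a by (simp add: L_def field_simps)
  have "\<forall>\<^sub>F n in sequentially. \<bar>\<alpha> n\<bar> < \<theta>"
    using a by (intro order_tendstoD(2)[OF tendsto_rabs[OF \<alpha>]]) (simp add: \<theta>_def)
  then have ev: "\<forall>\<^sub>F n in sequentially.
      \<bar>s (Suc n) - L\<bar> \<le> \<theta> * \<bar>s n - L\<bar> + \<bar>(\<alpha> n - a) * L + (\<beta> n - b)\<bar>"
  proof eventually_elim
    case (elim n)
    have "s (Suc n) - L = \<alpha> n * (s n - L) + ((\<alpha> n - a) * L + (\<beta> n - b))"
      using rec[of n] L by (simp add: algebra_simps)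
    also have "\<bar>\<dots>\<bar> \<le> \<bar>\<alpha> n\<bar> * \<bar>s n - L\<bar> + \<bar>(\<alpha> n - a) * L + (\<beta> n - b)\<bar>"
      by (metis abs_mult abs_triangle_ineq)
    also have "\<dots> \<le> \<theta> * \<bar>s n - L\<bar> + \<bar>(\<alpha> n - a) * L + (\<beta> n - b)\<bar>"
      using elim by (simp add: mult_right_mono)
    finally show ?case .
  qed
  have u: "(\<lambda>n. \<bar>(\<alpha> n - a) * L + (\<beta> n - b)\<bar>) \<longlonglongrightarrow> 0"
  proof -
    have "(\<lambda>n. (\<alpha> n - a) * L + (\<beta> n - b)) \<longlonglongrightarrow> (a - a) * L + (b - b)"
      using \<alpha> \<beta> by (intro tendsto_intros)
    then show ?thesis by (intro tendsto_rabs_zero) simp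
  qed
  have "(\<lambda>n. s n - L) \<longlonglongrightarrow> 0"
    by (rule tendsto_zero_contraction[OF ev _ _ u]) (use a in \<open>auto simp: \<theta>_def\<close>)
  then show ?thesis unfolding L_def by (rule LIM_zero_cancel)
qed

lemma tendsto_ratio_of_sums:
  fixes u w :: "nat \<Rightarrow> 'i \<Rightarrow> real"
  assumes I: "finite I" "I \<noteq> {}" and w: "\<And>n l. l \<in> I \<Longrightarrow> 0 < w n l"
    and lim: "\<And>l. l \<in> I \<Longrightarrow> (\<lambda>n. u n l / w n l) \<longlonglongrightarrow> c"
  shows "(\<lambda>n. (\<Sum>l\<in>I. u n l) / (\<Sum>l\<in>I. w n l)) \<longlonglongrightarrow> c"
proof -
  have W: "0 < (\<Sum>l\<in>I. w n l)" for n using I w by (intro sum_pos) auto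
  have bound: "\<bar>(\<Sum>l\<in>I. u n l) / (\<Sum>l\<in>I. w n l) - c\<bar> \<le> (\<Sum>l\<in>I. \<bar>u n l / w n l - c\<bar>)" for n
  proof -
    have "(\<Sum>l\<in>I. w n l / (\<Sum>l\<in>I. w n l) * (u n l / w n l - c))
        = (\<Sum>l\<in>I. (u n l - c * w n l) / (\<Sum>l\<in>I. w n l))"
    proof (rule sum.cong)
      fix l assume "l \<in> I"
      then show "w n l / (\<Sum>l\<in>I. w n l) * (u n l / w n l - c) = (u n l - c * w n l) / (\<Sum>l\<in>I. w n l)"
        using w[of l n] W[of n] by (simp add: field_simps)
    qed simp
    also have "\<dots> = (\<Sum>l\<in>I. u n l) / (\<Sum>l\<in>I. w n l) - c"
      using W[of n] by (simp add: sum_divide_distrib[symmetric] sum_subtractf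
          sum_distrib_left[symmetric] field_simps)
    finally have "(\<Sum>l\<in>I. u n l) / (\<Sum>l\<in>I. w n l) - c
        = (\<Sum>l\<in>I. w n l / (\<Sum>l\<in>I. w n l) * (u n l / w n l - c))" ..
    also have "\<bar>\<dots>\<bar> \<le> (\<Sum>l\<in>I. w n l / (\<Sum>l\<in>I. w n l) * \<bar>u n l / w n l - c\<bar>)"
      using W[of n] w by (auto intro!: order_trans[OF sum_abs] sum_mono simp: abs_mult
          less_imp_le)
    also have "\<dots> \<le> (\<Sum>l\<in>I. \<bar>u n l / w n l - c\<bar>)"
    proof (rule sum_mono)
      fix l assume "l \<in> I"
      then have "w n l \<le> (\<Sum>l\<in>I. w n l)"
        using I w by (intro member_le_sum) (auto intro: less_imp_le)
      then show "w n l / (\<Sum>l\<in>I. w n l) * \<bar>u n l / w n l - c\<bar> \<le> \<bar>u n l / w n l - c\<bar>"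
        using W[of n] less_imp_le[OF w[OF \<open>l \<in> I\<close>]]
        by (intro mult_left_le_one_le divide_nonneg_pos) simp_all
    qed
    finally show ?thesis .
  qed
  have sum_lim: "(\<lambda>n. \<Sum>l\<in>I. \<bar>u n l / w n l - c\<bar>) \<longlonglongrightarrow> 0"
  proof (rule tendsto_null_sum)
    fix l assume "l \<in> I"
    show "(\<lambda>n. \<bar>u n l / w n l - c\<bar>) \<longlonglongrightarrow> 0"
      using LIM_zero[OF lim[OF \<open>l \<in> I\<close>]] by (rule tendsto_rabs_zero)
  qed
  have "(\<lambda>n. \<bar>(\<Sum>l\<in>I. u n l) / (\<Sum>l\<in>I. w n l) - c\<bar>) \<longlonglongrightarrow> 0"
    by (rule tendsto_sandwich[OF _ _ tendsto_const sum_lim]) (use bound in auto)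
  then show ?thesis by (rule LIM_zero_cancel[OF tendsto_rabs_zero_cancel])
qed

lemma LIMSEQ_arith_subseq:
  assumes "f \<longlonglongrightarrow> L" "0 < h"
  shows "(\<lambda>q. f (q * h + c)) \<longlonglongrightarrow> L"
proof -
  have "strict_mono (\<lambda>q. q * h + c)" using assms(2) by (simp add: strict_mono_Suc_iff)
  from LIMSEQ_subseq_LIMSEQ[OF assms(1) this] show ?thesis by (simp add: o_def)
qed

section \<open>Ratios of iterates of a primitive matrix\<close>

locale primitive_matrix =
  fixes A :: "real mat" and k :: nat
  assumes carrier: "A \<in> carrier_mat k k"
    and nonneg: "\<And>i j. i < k \<Longrightarrow> j < k \<Longrightarrow> 0 \<le> A $$ (i, j)"
    and primitive: "\<exists>p>0. \<forall>i<k. \<forall>j<k. 0 < (A ^\<^sub>m p) $$ (i, j)"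
      \<comment> \<open>\<open>p > 0\<close> excludes the degenerate \<open>k = 1\<close>, \<open>A = 0\<close>, where only \<open>A\<^sup>0\<close> is positive\<close>
    and dim_pos: "0 < k"
begin

definition P :: "nat \<Rightarrow> nat \<Rightarrow> nat \<Rightarrow> real" where
  "P n i j = (A ^\<^sub>m n) $$ (i, j)"

lemma P_0: "i < k \<Longrightarrow> j < k \<Longrightarrow> P 0 i j = (if i = j then 1 else 0)"
  using carrier by (simp add: P_def)

lemma P_1: "i < k \<Longrightarrow> j < k \<Longrightarrow> P (Suc 0) i j = A $$ (i, j)"
  using carrier by (simp add: P_def)

lemma P_add: "i < k \<Longrightarrow> j < k \<Longrightarrow> P (s + n) i j = (\<Sum>l<k. P s i l * P n l j)"
  unfolding P_def pow_mat_add[OF carrier]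
  by (rule index_mult_mat_sum[OF pow_carrier_mat[OF carrier] pow_carrier_mat[OF carrier]])

lemma P_Suc: "i < k \<Longrightarrow> j < k \<Longrightarrow> P (Suc n) i j = (\<Sum>l<k. P n i l * A $$ (l, j))"
  using P_add[of i j n "Suc 0"] by (simp add: P_1)

lemma P_Suc_left: "i < k \<Longrightarrow> j < k \<Longrightarrow> P (Suc n) i j = (\<Sum>l<k. A $$ (i, l) * P n l j)"
  using P_add[of i j "Suc 0" n] by (simp add: P_1)

lemma P_nonneg: "i < k \<Longrightarrow> j < k \<Longrightarrow> 0 \<le> P n i j"
  by (induction n arbitrary: j) (auto simp: P_0 P_Suc nonneg intro!: sum_nonneg)

lemma primitive_exponent: "\<exists>p>0. \<forall>i<k. \<forall>j<k. 0 < P p i j"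
  using primitive unfolding P_def .

lemma row_positive:
  assumes "i < k"
  shows "\<exists>j<k. 0 < A $$ (i, j)"
proof (rule ccontr)
  assume "\<not> ?thesis"
  then have zero: "A $$ (i, j) = 0" if "j < k" for j
    using nonneg[OF assms that] that by force
  obtain p where "0 < p" and pos: "\<And>i j. i < k \<Longrightarrow> j < k \<Longrightarrow> 0 < P p i j"
    using primitive_exponent by blast
  then obtain q where "p = Suc q" using gr0_implies_Suc by blast
  then have "P p i 0 = 0" using assms dim_pos zero by (simp add: P_Suc_left)
  then show False using pos[OF assms dim_pos] by simp
qed

lemma transpose_pow_entry:
  "i < k \<Longrightarrow> j < k \<Longrightarrow> (transpose_mat A ^\<^sub>m n) $$ (i, j) = P n j i"
  using carrier by (simp add: P_def transpose_pow_mat[OF carrier, symmetric])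

lemma primitive_transpose: "primitive_matrix (transpose_mat A) k"
proof unfold_locales
  show "transpose_mat A \<in> carrier_mat k k" using carrier by simp
  show "0 \<le> transpose_mat A $$ (i, j)" if "i < k" "j < k" for i j
    using that carrier nonneg by simp
  from primitive_exponent show "\<exists>p>0. \<forall>i<k. \<forall>j<k. 0 < (transpose_mat A ^\<^sub>m p) $$ (i, j)"
    by (auto simp: transpose_pow_entry)
qed (rule dim_pos)

definition pow_apply :: "nat \<Rightarrow> (nat \<Rightarrow> real) \<Rightarrow> nat \<Rightarrow> real" where
  "pow_apply n y i = (\<Sum>j<k. P n i j * y j)"

lemma pow_apply_add:
  assumes "i < k"
  shows "pow_apply (s + n) y i = (\<Sum>l<k. P s i l * pow_apply n y l)"
proof -
  have "pow_apply (s + n) y i = (\<Sum>j<k. \<Sum>l<k. P s i l * P n l j * y j)"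
    using assms by (simp add: pow_apply_def P_add sum_distrib_right)
  also have "\<dots> = (\<Sum>l<k. \<Sum>j<k. P s i l * P n l j * y j)" by (rule sum.swap)
  also have "\<dots> = (\<Sum>l<k. P s i l * pow_apply n y l)"
    by (simp add: pow_apply_def sum_distrib_left mult.assoc)
  finally show ?thesis .
qed

lemma pow_apply_pos:
  assumes y: "\<And>j. j < k \<Longrightarrow> 0 < y j" and "i < k"
  shows "0 < pow_apply n y i"
  using assms(2)
proof (induction n arbitrary: i)
  case 0
  have "pow_apply 0 y i = (\<Sum>j<k. if i = j then y j else 0)"
    unfolding pow_apply_def using 0 by (intro sum.cong) (auto simp: P_0)
  then show ?case using y 0 by simp
next
  case (Suc n)
  obtain j where j: "j < k" "0 < A $$ (i, j)" using row_positive[OF Suc.prems] by blast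
  have "pow_apply (Suc n) y i = (\<Sum>l<k. A $$ (i, l) * pow_apply n y l)"
    using pow_apply_add[OF Suc.prems, of "Suc 0" n y] by (simp add: P_1 Suc.prems)
  also have "0 < \<dots>"
    using j Suc.IH nonneg[OF Suc.prems]
    by (intro sum_pos2[where i = j]) (auto intro!: mult_nonneg_nonneg intro: less_imp_le)
  finally show ?case .
qed

context
  fixes x y :: "nat \<Rightarrow> real"
  assumes y_pos: "\<And>j. j < k \<Longrightarrow> 0 < y j"
begin

lemma pow_apply_y_pos: "i < k \<Longrightarrow> 0 < pow_apply n y i"
  by (rule pow_apply_pos[where y = y, OF y_pos])

definition ratio :: "nat \<Rightarrow> nat \<Rightarrow> real" where
  "ratio n i = pow_apply n x i / pow_apply n y i"

definition ratio_min :: "nat \<Rightarrow> real" where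
  "ratio_min n = Min (ratio n ` {..<k})"

definition ratio_max :: "nat \<Rightarrow> real" where
  "ratio_max n = Max (ratio n ` {..<k})"

definition weight :: "nat \<Rightarrow> nat \<Rightarrow> nat \<Rightarrow> nat \<Rightarrow> real" where
  "weight s n i l = P s i l * pow_apply n y l / pow_apply (s + n) y i"

lemma weight_nonneg: "i < k \<Longrightarrow> l < k \<Longrightarrow> 0 \<le> weight s n i l"
  using pow_apply_y_pos[of l n] pow_apply_y_pos[of i "s + n"] P_nonneg[of i l s]
  by (simp add: weight_def)

lemma weight_sum:
  assumes "i < k"
  shows "(\<Sum>l<k. weight s n i l) = 1"
proof -
  have "(\<Sum>l<k. weight s n i l) = pow_apply (s + n) y i / pow_apply (s + n) y i"
    by (simp add: weight_def sum_divide_distrib[symmetric] pow_apply_add[OF assms])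
  then show ?thesis using pow_apply_y_pos[OF assms, of "s + n"] by simp
qed

lemma ratio_shift:
  assumes "i < k"
  shows "ratio (s + n) i = (\<Sum>l<k. weight s n i l * ratio n l)"
proof -
  have "(\<Sum>l<k. weight s n i l * ratio n l) = (\<Sum>l<k. P s i l * pow_apply n x l / pow_apply (s + n) y i)"
  proof (rule sum.cong)
    fix l assume "l \<in> {..<k}"
    then show "weight s n i l * ratio n l = P s i l * pow_apply n x l / pow_apply (s + n) y i"
      using pow_apply_y_pos[of l n] by (simp add: weight_def ratio_def)
  qed simp
  also have "\<dots> = ratio (s + n) i"
    by (simp add: ratio_def pow_apply_add[OF assms] sum_divide_distrib)
  finally show ?thesis ..
qed

lemma ratio_bounds: "i < k \<Longrightarrow> ratio_min n \<le> ratio n i \<and> ratio n i \<le> ratio_max n"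
  by (simp add: ratio_min_def ratio_max_def)

lemma ratio_min_attained:
  obtains i where "i < k" "ratio_min n = ratio n i"
proof -
  have "ratio_min n \<in> ratio n ` {..<k}"
    unfolding ratio_min_def using dim_pos by (intro Min_in) auto
  then show thesis using that by blast
qed

lemma ratio_max_attained:
  obtains i where "i < k" "ratio_max n = ratio n i"
proof -
  have "ratio_max n \<in> ratio n ` {..<k}"
    unfolding ratio_max_def using dim_pos by (intro Max_in) auto
  then show thesis using that by blast
qed

lemma ratio_min_shift: "ratio_min n \<le> ratio_min (s + n)"
proof -
  obtain i where i: "i < k" "ratio_min (s + n) = ratio (s + n) i" by (rule ratio_min_attained)
  have "ratio_min n = (\<Sum>l<k. weight s n i l * ratio_min n)"
    using weight_sum[OF i(1)] by (simp add: sum_distrib_right[symmetric])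
  also have "\<dots> \<le> (\<Sum>l<k. weight s n i l * ratio n l)"
    using i ratio_bounds weight_nonneg by (intro sum_mono mult_left_mono) auto
  finally show ?thesis using i by (simp add: ratio_shift)
qed

lemma ratio_max_shift: "ratio_max (s + n) \<le> ratio_max n"
proof -
  obtain i where i: "i < k" "ratio_max (s + n) = ratio (s + n) i" by (rule ratio_max_attained)
  have "(\<Sum>l<k. weight s n i l * ratio n l) \<le> (\<Sum>l<k. weight s n i l * ratio_max n)"
    using i ratio_bounds weight_nonneg by (intro sum_mono mult_left_mono) auto
  also have "\<dots> = ratio_max n"
    using weight_sum[OF i(1)] by (simp add: sum_distrib_right[symmetric])
  finally show ?thesis using i by (simp add: ratio_shift)
qed

lemma weight_minorised:
  assumes "i < k" "l < k" "0 < m"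
    and lo: "\<And>l. l < k \<Longrightarrow> m \<le> P s i l" and hi: "\<And>l. l < k \<Longrightarrow> P s i l \<le> M"
  shows "m / M * (pow_apply n y l / (\<Sum>l<k. pow_apply n y l)) \<le> weight s n i l"
proof -
  have "pow_apply (s + n) y i \<le> (\<Sum>l<k. M * pow_apply n y l)"
    unfolding pow_apply_add[OF assms(1)]
    using hi pow_apply_y_pos by (intro sum_mono mult_right_mono) (auto intro: less_imp_le)
  also have "\<dots> = M * (\<Sum>l<k. pow_apply n y l)" by (rule sum_distrib_left[symmetric])
  finally have le: "pow_apply (s + n) y i \<le> M * (\<Sum>l<k. pow_apply n y l)" .
  have "m / M * (pow_apply n y l / (\<Sum>l<k. pow_apply n y l))
      = m * pow_apply n y l / (M * (\<Sum>l<k. pow_apply n y l))" by simp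
  also have "\<dots> \<le> P s i l * pow_apply n y l / pow_apply (s + n) y i"
    using assms(2) lo[OF assms(2)] pow_apply_y_pos[OF assms(1)] pow_apply_y_pos[OF assms(2)] le
      P_nonneg[OF assms(1,2)] less_imp_le[OF pow_apply_y_pos[OF assms(2)]]
    by (intro frac_le mult_right_mono mult_nonneg_nonneg) auto
  finally show ?thesis by (simp add: weight_def)
qed

text \<open>Doeblin's argument: every row of \<open>weight p n\<close> dominates \<open>\<delta>\<close> times the probability
  vector \<open>v\<close>, so two such averages of \<open>ratio n\<close> differ by at most \<open>(1 - \<delta>)\<close> times its spread.\<close>

lemma ratio_oscillation_contracts:
  obtains p \<delta> where "0 < p" "0 < \<delta>" "\<delta> \<le> 1"
    "\<And>n. ratio_max (p + n) - ratio_min (p + n) \<le> (1 - \<delta>) * (ratio_max n - ratio_min n)"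
proof -
  obtain p where p: "0 < p" "\<And>i j. i < k \<Longrightarrow> j < k \<Longrightarrow> 0 < P p i j"
    using primitive_exponent by blast
  define E where "E = (\<lambda>(i, j). P p i j) ` ({..<k} \<times> {..<k})"
  have E: "finite E" "E \<noteq> {}" using dim_pos by (auto simp: E_def)
  have "P p i j \<in> E" if "i < k" "j < k" for i j
    using that unfolding E_def by (auto intro!: image_eqI[of _ _ "(i, j)"])
  then have entries: "Min E \<le> P p i j" "P p i j \<le> Max E" if "i < k" "j < k" for i j
    using E that by simp_all
  have "0 < Min E" using E p(2) by (auto simp: E_def)
  define \<delta> where "\<delta> = Min E / Max E"
  have \<delta>: "0 < \<delta>" "\<delta> \<le> 1"
    using \<open>0 < Min E\<close> entries[OF dim_pos dim_pos] by (auto simp: \<delta>_def)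
  have "ratio_max (p + n) - ratio_min (p + n) \<le> (1 - \<delta>) * (ratio_max n - ratio_min n)" for n
  proof -
    define v where "v l = pow_apply n y l / (\<Sum>l<k. pow_apply n y l)" for l
    have "0 < (\<Sum>l<k. pow_apply n y l)" using pow_apply_y_pos dim_pos by (intro sum_pos) auto
    then have v: "(\<Sum>l<k. v l) = 1" by (simp add: v_def sum_divide_distrib[symmetric])
    have minor: "\<delta> * v l \<le> weight p n i l" if "i < k" "l < k" for i l
      unfolding \<delta>_def v_def using that \<open>0 < Min E\<close> entries by (intro weight_minorised) auto
    obtain i where i: "i < k" "ratio_max (p + n) = ratio (p + n) i" by (rule ratio_max_attained)
    obtain i' where i': "i' < k" "ratio_min (p + n) = ratio (p + n) i'" by (rule ratio_min_attained)
    have "ratio (p + n) i \<le> (1 - \<delta>) * ratio_max n + \<delta> * (\<Sum>l<k. v l * ratio n l)"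
      unfolding ratio_shift[OF i(1)] using minor i ratio_bounds v
      by (intro convex_comb_le weight_sum) auto
    moreover have "(1 - \<delta>) * ratio_min n + \<delta> * (\<Sum>l<k. v l * ratio n l) \<le> ratio (p + n) i'"
      unfolding ratio_shift[OF i'(1)] using minor i' ratio_bounds v
      by (intro convex_comb_ge weight_sum) auto
    ultimately show ?thesis using i i' by (simp add: algebra_simps)
  qed
  then show thesis using p(1) \<delta> by (intro that) auto
qed

lemma ratio_converges: "\<exists>c. \<forall>i<k. (\<lambda>n. ratio n i) \<longlonglongrightarrow> c"
proof -
  obtain p \<delta> where p: "0 < p" "0 < \<delta>" "\<delta> \<le> 1" and contracts:
    "\<And>n. ratio_max (p + n) - ratio_min (p + n) \<le> (1 - \<delta>) * (ratio_max n - ratio_min n)"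
    using ratio_oscillation_contracts by blast
  have inc: "incseq ratio_min" using ratio_min_shift[of _ 1] by (intro incseq_SucI) simp
  have dec: "decseq ratio_max" using ratio_max_shift[of 1] by (intro decseq_SucI) simp
  have min_le_max: "ratio_min n \<le> ratio_max n'" for n n'
  proof -
    have "ratio_min n \<le> ratio_min (max n n')" using inc by (simp add: incseq_def)
    also have "\<dots> \<le> ratio_max (max n n')" using ratio_bounds[OF dim_pos] by (meson order_trans)
    also have "\<dots> \<le> ratio_max n'" using dec by (simp add: decseq_def)
    finally show ?thesis .
  qed
  have "\<forall>n. ratio_min n \<le> ratio_max 0" "\<forall>n. ratio_min 0 \<le> ratio_max n"
    using min_le_max by simp_all
  then obtain L U where L: "ratio_min \<longlonglongrightarrow> L" and U: "ratio_max \<longlonglongrightarrow> U"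
    using incseq_convergent[OF inc] decseq_convergent[OF dec] by metis
  have osc: "ratio_max (q * p) - ratio_min (q * p) \<le> (1 - \<delta>) ^ q * (ratio_max 0 - ratio_min 0)" for q
  proof (induction q)
    case (Suc q)
    have "ratio_max (Suc q * p) - ratio_min (Suc q * p)
        \<le> (1 - \<delta>) * (ratio_max (q * p) - ratio_min (q * p))"
      using contracts[of "q * p"] by (simp add: add.commute)
    also have "\<dots> \<le> (1 - \<delta>) * ((1 - \<delta>) ^ q * (ratio_max 0 - ratio_min 0))"
      using Suc.IH p by (intro mult_left_mono) auto
    finally show ?case by simp
  qed simp
  have osc_lim: "(\<lambda>q. ratio_max (q * p) - ratio_min (q * p)) \<longlonglongrightarrow> U - L"
    using LIMSEQ_arith_subseq[OF tendsto_diff[OF U L] p(1), of 0] by simp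
  have "(\<lambda>q. (1 - \<delta>) ^ q * (ratio_max 0 - ratio_min 0)) \<longlonglongrightarrow> 0"
    using p by (intro tendsto_mult_left_zero LIMSEQ_power_zero) auto
  then have "U - L \<le> 0" by (rule LIMSEQ_le[OF osc_lim]) (use osc in auto)
  moreover have "L \<le> U" by (rule LIMSEQ_le[OF L U]) (use min_le_max in auto)
  ultimately have "U = L" by simp
  have "(\<lambda>n. ratio n i) \<longlonglongrightarrow> L" if "i < k" for i
    by (rule tendsto_sandwich[OF _ _ L]) (use ratio_bounds[OF that] U \<open>U = L\<close> in auto)
  then show ?thesis by blast
qed

end

section \<open>Perron vectors\<close>

definition row_sum :: "nat \<Rightarrow> nat \<Rightarrow> real" where
  "row_sum n i = (\<Sum>j<k. P n i j)"

definition total :: "nat \<Rightarrow> real" where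
  "total n = (\<Sum>i<k. row_sum n i)"

text \<open>Read off along row 0; by \<open>P_row_sum_tendsto\<close> every row has the same limit.\<close>

definition left_vec :: "nat \<Rightarrow> real" where
  "left_vec j = lim (\<lambda>n. P n 0 j / row_sum n 0)"

definition right_vec :: "nat \<Rightarrow> real" where
  "right_vec i = lim (\<lambda>n. row_sum n i / total n)"

text \<open>The growth rate of the row sums, cf. \<open>row_sum_ratio_tendsto\<close>.\<close>

definition perron_root :: real where
  "perron_root = (\<Sum>l<k. left_vec l * (\<Sum>j<k. A $$ (l, j)))"

lemma row_sum_eq_pow_apply: "row_sum n i = pow_apply n (\<lambda>_. 1) i"
  by (simp add: row_sum_def pow_apply_def)

lemma row_sum_pos: "i < k \<Longrightarrow> 0 < row_sum n i"
  unfolding row_sum_eq_pow_apply by (rule pow_apply_pos) simp_all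

lemma total_pos: "0 < total n"
  unfolding total_def using row_sum_pos dim_pos by (intro sum_pos) auto

lemma row_sum_add: "i < k \<Longrightarrow> row_sum (s + n) i = (\<Sum>l<k. P s i l * row_sum n l)"
  unfolding row_sum_eq_pow_apply by (rule pow_apply_add)

lemma row_sum_Suc:
  assumes "i < k"
  shows "row_sum (Suc n) i = (\<Sum>l<k. P n i l * (\<Sum>j<k. A $$ (l, j)))"
proof -
  have "row_sum (Suc n) i = (\<Sum>j<k. \<Sum>l<k. P n i l * A $$ (l, j))"
    using assms by (simp add: row_sum_def P_Suc)
  also have "\<dots> = (\<Sum>l<k. \<Sum>j<k. P n i l * A $$ (l, j))" by (rule sum.swap)
  finally show ?thesis by (simp add: sum_distrib_left)
qed

lemma row_sum_Suc_left: "i < k \<Longrightarrow> row_sum (Suc n) i = (\<Sum>l<k. A $$ (i, l) * row_sum n l)"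
  using row_sum_add[of i "Suc 0" n] by (simp add: P_1)

lemma P_row_sum_tendsto:
  assumes "i < k" "j < k"
  shows "(\<lambda>n. P n i j / row_sum n i) \<longlonglongrightarrow> left_vec j"
proof -
  define e where "e l = (if l = j then 1 else 0 :: real)" for l
  have ratio_eq: "ratio e (\<lambda>_. 1) n i' = P n i' j / row_sum n i'" for n i'
  proof -
    have "pow_apply n e i' = (\<Sum>l<k. if l = j then P n i' l else 0)"
      unfolding pow_apply_def e_def by (intro sum.cong) auto
    then show ?thesis using assms(2) by (simp add: ratio_def row_sum_eq_pow_apply)
  qed
  obtain c where c: "\<And>i'. i' < k \<Longrightarrow> (\<lambda>n. P n i' j / row_sum n i') \<longlonglongrightarrow> c"
    using ratio_converges[of "\<lambda>_. 1" e] by (auto simp: ratio_eq)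
  have "left_vec j = c" unfolding left_vec_def using c[OF dim_pos] by (rule limI)
  then show ?thesis using c[OF assms(1)] by simp
qed

lemma row_sum_total_tendsto:
  assumes "i < k"
  shows "(\<lambda>n. row_sum n i / total n) \<longlonglongrightarrow> right_vec i"
proof -
  interpret T: primitive_matrix "transpose_mat A" k by (rule primitive_transpose)
  have TP: "T.P n a b = P n b a" if "a < k" "b < k" for n a b
    using that by (simp add: T.P_def transpose_pow_entry)
  have "(\<lambda>n. (\<Sum>l<k. P n i l) / (\<Sum>l<k. T.row_sum n l)) \<longlonglongrightarrow> T.left_vec i"
  proof (rule tendsto_ratio_of_sums)
    fix l assume "l \<in> {..<k}"
    then show "(\<lambda>n. P n i l / T.row_sum n l) \<longlonglongrightarrow> T.left_vec i"
      using T.P_row_sum_tendsto[of l i] assms by (simp add: TP)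
  qed (use T.row_sum_pos dim_pos in auto)
  moreover have "(\<Sum>l<k. T.row_sum n l) = total n" for n
  proof -
    have "(\<Sum>l<k. T.row_sum n l) = (\<Sum>l<k. \<Sum>a<k. P n a l)"
      unfolding T.row_sum_def by (simp add: TP)
    also have "\<dots> = total n" unfolding total_def row_sum_def by (rule sum.swap)
    finally show ?thesis .
  qed
  ultimately have "(\<lambda>n. row_sum n i / total n) \<longlonglongrightarrow> T.left_vec i"
    by (simp add: row_sum_def)
  moreover from limI[OF this] have "right_vec i = T.left_vec i" by (simp add: right_vec_def)
  ultimately show ?thesis by simp
qed

lemma left_vec_nonneg: "j < k \<Longrightarrow> 0 \<le> left_vec j"
  by (rule LIMSEQ_le_const[OF P_row_sum_tendsto[OF dim_pos]])
    (auto intro!: divide_nonneg_pos P_nonneg row_sum_pos dim_pos)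

lemma right_vec_nonneg: "i < k \<Longrightarrow> 0 \<le> right_vec i"
  by (rule LIMSEQ_le_const[OF row_sum_total_tendsto])
    (auto intro!: divide_nonneg_pos less_imp_le[OF row_sum_pos] total_pos)

lemma left_vec_sum: "(\<Sum>j<k. left_vec j) = 1"
proof -
  have "(\<lambda>n. \<Sum>j<k. P n 0 j / row_sum n 0) \<longlonglongrightarrow> (\<Sum>j<k. left_vec j)"
    by (rule tendsto_sum) (simp add: P_row_sum_tendsto dim_pos)
  moreover have "(\<Sum>j<k. P n 0 j / row_sum n 0) = 1" for n
    using row_sum_pos[OF dim_pos, of n] by (simp add: sum_divide_distrib[symmetric] row_sum_def)
  ultimately have "(\<lambda>n. 1) \<longlonglongrightarrow> (\<Sum>j<k. left_vec j)" by simp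
  from LIMSEQ_unique[OF tendsto_const this] show ?thesis by simp
qed

lemma right_vec_sum: "(\<Sum>i<k. right_vec i) = 1"
proof -
  have "(\<lambda>n. \<Sum>i<k. row_sum n i / total n) \<longlonglongrightarrow> (\<Sum>i<k. right_vec i)"
    by (rule tendsto_sum) (simp add: row_sum_total_tendsto)
  moreover have "(\<Sum>i<k. row_sum n i / total n) = 1" for n
    using total_pos[of n] by (simp add: sum_divide_distrib[symmetric] total_def)
  ultimately have "(\<lambda>n. 1) \<longlonglongrightarrow> (\<Sum>i<k. right_vec i)" by simp
  from LIMSEQ_unique[OF tendsto_const this] show ?thesis by simp
qed

lemma row_sum_ratio_tendsto:
  assumes "i < k"
  shows "(\<lambda>n. row_sum (Suc n) i / row_sum n i) \<longlonglongrightarrow> perron_root"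
proof -
  have "(\<lambda>n. \<Sum>l<k. P n i l / row_sum n i * (\<Sum>j<k. A $$ (l, j))) \<longlonglongrightarrow> perron_root"
    unfolding perron_root_def
    by (rule tendsto_sum, rule tendsto_mult_right, rule P_row_sum_tendsto) (use assms in auto)
  moreover have "(\<Sum>l<k. P n i l / row_sum n i * (\<Sum>j<k. A $$ (l, j)))
      = row_sum (Suc n) i / row_sum n i" for n
    by (simp add: row_sum_Suc[OF assms] sum_divide_distrib)
  ultimately show ?thesis by simp
qed

lemma total_ratio_tendsto: "(\<lambda>n. total (Suc n) / total n) \<longlonglongrightarrow> perron_root"
  unfolding total_def
  by (rule tendsto_ratio_of_sums) (use row_sum_pos row_sum_ratio_tendsto dim_pos in auto)

lemma left_eigen:
  assumes "j < k"
  shows "(\<Sum>l<k. left_vec l * A $$ (l, j)) = perron_root * left_vec j"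
proof -
  have "(\<lambda>n. \<Sum>l<k. P n 0 l / row_sum n 0 * A $$ (l, j)) \<longlonglongrightarrow> (\<Sum>l<k. left_vec l * A $$ (l, j))"
    by (rule tendsto_sum, rule tendsto_mult_right, rule P_row_sum_tendsto) (use dim_pos in auto)
  moreover have "(\<Sum>l<k. P n 0 l / row_sum n 0 * A $$ (l, j))
      = P (Suc n) 0 j / row_sum (Suc n) 0 * (row_sum (Suc n) 0 / row_sum n 0)" for n
  proof -
    have "(\<Sum>l<k. P n 0 l / row_sum n 0 * A $$ (l, j)) = P (Suc n) 0 j / row_sum n 0"
      using assms dim_pos by (simp add: P_Suc sum_divide_distrib[symmetric])
    then show ?thesis using row_sum_pos[OF dim_pos, of "Suc n"] by simp
  qed
  moreover have "(\<lambda>n. P (Suc n) 0 j / row_sum (Suc n) 0 * (row_sum (Suc n) 0 / row_sum n 0))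
      \<longlonglongrightarrow> left_vec j * perron_root"
    by (intro tendsto_mult LIMSEQ_Suc[OF P_row_sum_tendsto[OF dim_pos assms]]
        row_sum_ratio_tendsto[OF dim_pos])
  ultimately show ?thesis using LIMSEQ_unique by (simp add: mult.commute)
qed

lemma right_eigen:
  assumes "i < k"
  shows "(\<Sum>l<k. A $$ (i, l) * right_vec l) = perron_root * right_vec i"
proof -
  have "(\<lambda>n. \<Sum>l<k. A $$ (i, l) * (row_sum n l / total n)) \<longlonglongrightarrow> (\<Sum>l<k. A $$ (i, l) * right_vec l)"
    by (rule tendsto_sum, rule tendsto_mult_left, rule row_sum_total_tendsto) auto
  moreover have "(\<Sum>l<k. A $$ (i, l) * (row_sum n l / total n))
      = row_sum (Suc n) i / total (Suc n) * (total (Suc n) / total n)" for n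
  proof -
    have "(\<Sum>l<k. A $$ (i, l) * (row_sum n l / total n)) = row_sum (Suc n) i / total n"
      by (simp add: row_sum_Suc_left[OF assms] sum_divide_distrib[symmetric])
    then show ?thesis using total_pos[of "Suc n"] by simp
  qed
  moreover have "(\<lambda>n. row_sum (Suc n) i / total (Suc n) * (total (Suc n) / total n))
      \<longlonglongrightarrow> right_vec i * perron_root"
    by (intro tendsto_mult LIMSEQ_Suc[OF row_sum_total_tendsto[OF assms]] total_ratio_tendsto)
  ultimately show ?thesis using LIMSEQ_unique by (simp add: mult.commute)
qed


lemma left_eigen_pow: "j < k \<Longrightarrow> (\<Sum>l<k. left_vec l * P t l j) = perron_root ^ t * left_vec j"
proof (induction t arbitrary: j)
  case 0
  have "(\<Sum>l<k. left_vec l * P 0 l j) = (\<Sum>l<k. if l = j then left_vec l else 0)"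
    using 0 by (intro sum.cong) (auto simp: P_0)
  then show ?case using 0 by simp
next
  case (Suc t)
  have "(\<Sum>l<k. left_vec l * P (Suc t) l j) = (\<Sum>l<k. \<Sum>l'<k. left_vec l * P t l l' * A $$ (l', j))"
    using Suc.prems by (simp add: P_Suc sum_distrib_left mult.assoc)
  also have "\<dots> = (\<Sum>l'<k. \<Sum>l<k. left_vec l * P t l l' * A $$ (l', j))"
    by (rule sum.swap)
  also have "\<dots> = (\<Sum>l'<k. (\<Sum>l<k. left_vec l * P t l l') * A $$ (l', j))"
    by (simp add: sum_distrib_right)
  also have "\<dots> = perron_root ^ t * (\<Sum>l'<k. left_vec l' * A $$ (l', j))"
    by (simp add: Suc.IH sum_distrib_left mult.assoc)
  finally show ?case using left_eigen[OF Suc.prems] by simp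
qed

lemma right_eigen_pow: "i < k \<Longrightarrow> (\<Sum>l<k. P t i l * right_vec l) = perron_root ^ t * right_vec i"
proof (induction t arbitrary: i)
  case 0
  have "(\<Sum>l<k. P 0 i l * right_vec l) = (\<Sum>l<k. if l = i then right_vec l else 0)"
    using 0 by (intro sum.cong) (auto simp: P_0)
  then show ?case using 0 by simp
next
  case (Suc t)
  have "(\<Sum>l<k. P (Suc t) i l * right_vec l) = (\<Sum>l<k. \<Sum>l'<k. A $$ (i, l') * P t l' l * right_vec l)"
    using Suc.prems by (simp add: P_Suc_left sum_distrib_right)
  also have "\<dots> = (\<Sum>l'<k. \<Sum>l<k. A $$ (i, l') * P t l' l * right_vec l)"
    by (rule sum.swap)
  also have "\<dots> = (\<Sum>l'<k. A $$ (i, l') * (\<Sum>l<k. P t l' l * right_vec l))"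
    by (simp add: sum_distrib_left mult.assoc)
  also have "\<dots> = perron_root ^ t * (\<Sum>l'<k. A $$ (i, l') * right_vec l')"
    by (simp add: Suc.IH sum_distrib_left mult.left_commute)
  finally show ?case using right_eigen[OF Suc.prems] by simp
qed

lemma perron_root_nonneg: "0 \<le> perron_root"
  unfolding perron_root_def using left_vec_nonneg nonneg
  by (auto intro!: sum_nonneg mult_nonneg_nonneg)

lemma exists_left_vec_pos: "\<exists>l<k. 0 < left_vec l"
proof (rule ccontr)
  assume "\<not> ?thesis"
  then have "left_vec l = 0" if "l < k" for l
    using that left_vec_nonneg[OF that] by (meson not_less order.antisym)
  then have "(\<Sum>l<k. left_vec l) = 0" by simp
  then show False using left_vec_sum by simp
qed

lemma exists_right_vec_pos: "\<exists>l<k. 0 < right_vec l"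
proof (rule ccontr)
  assume "\<not> ?thesis"
  then have "right_vec l = 0" if "l < k" for l
    using that right_vec_nonneg[OF that] by (meson not_less order.antisym)
  then have "(\<Sum>l<k. right_vec l) = 0" by simp
  then show False using right_vec_sum by simp
qed

lemma pow_perron_root_left_vec_pos: "\<exists>p>0. \<forall>j<k. 0 < perron_root ^ p * left_vec j"
proof -
  obtain p where p: "0 < p" "\<And>i j. i < k \<Longrightarrow> j < k \<Longrightarrow> 0 < P p i j"
    using primitive_exponent by blast
  obtain l where l: "l < k" "0 < left_vec l" using exists_left_vec_pos by blast
  have "0 < (\<Sum>l<k. left_vec l * P p l j)" if "j < k" for j
    using l p(2) that left_vec_nonneg P_nonneg
    by (intro sum_pos2[where i = l]) (auto intro: mult_nonneg_nonneg)
  then show ?thesis using p(1) by (auto simp: left_eigen_pow)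
qed

lemma perron_root_pos: "0 < perron_root"
proof -
  obtain p where "0 < p" "0 < perron_root ^ p * left_vec 0"
    using pow_perron_root_left_vec_pos dim_pos by blast
  then have "perron_root \<noteq> 0" by (auto simp: power_0_left)
  then show ?thesis using perron_root_nonneg by simp
qed

lemma left_vec_pos: "j < k \<Longrightarrow> 0 < left_vec j"
  using pow_perron_root_left_vec_pos perron_root_pos
  by (auto simp: zero_less_mult_iff)

lemma right_vec_pos:
  assumes "i < k"
  shows "0 < right_vec i"
proof -
  obtain p where p: "0 < p" "\<And>i j. i < k \<Longrightarrow> j < k \<Longrightarrow> 0 < P p i j"
    using primitive_exponent by blast
  obtain l where l: "l < k" "0 < right_vec l" using exists_right_vec_pos by blast
  have "0 < (\<Sum>l<k. P p i l * right_vec l)"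
    using l p(2) assms right_vec_nonneg P_nonneg
    by (intro sum_pos2[where i = l]) (auto intro: mult_nonneg_nonneg)
  then show ?thesis using perron_root_pos by (simp add: right_eigen_pow assms zero_less_mult_iff)
qed

lemma eigenvalue_perron_root: "eigenvalue A perron_root"
  unfolding eigenvalue_def eigenvector_def
proof (intro exI conjI)
  let ?v = "vec k right_vec"
  show "?v \<in> carrier_vec (dim_row A)" using carrier by simp
  show "?v \<noteq> 0\<^sub>v (dim_row A)"
  proof
    assume "?v = 0\<^sub>v (dim_row A)"
    then have "?v $ 0 = 0\<^sub>v k $ 0" using carrier by simp
    then show False using right_vec_pos[OF dim_pos] dim_pos by simp
  qed
  show "A *\<^sub>v ?v = perron_root \<cdot>\<^sub>v ?v"
  proof (rule eq_vecI)
    fix i assume "i < dim_vec (perron_root \<cdot>\<^sub>v ?v)"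
    then have i: "i < k" by simp
    have "(A *\<^sub>v ?v) $ i = (\<Sum>l<k. A $$ (i, l) * right_vec l)"
      using i by (simp add: index_mult_mat_vec_sum[OF carrier])
    then show "(A *\<^sub>v ?v) $ i = (perron_root \<cdot>\<^sub>v ?v) $ i"
      using i by (simp add: right_eigen)
  qed (use carrier in simp)
qed

lemma eigenvalue_le_perron_root:
  assumes "eigenvalue A x"
  shows "x \<le> perron_root"
proof -
  obtain w where w: "w \<in> carrier_vec k" "w \<noteq> 0\<^sub>v k" "A *\<^sub>v w = x \<cdot>\<^sub>v w"
    using assms carrier unfolding eigenvalue_def eigenvector_def by auto
  have abs_le: "\<bar>x\<bar> * \<bar>w $ i\<bar> \<le> (\<Sum>l<k. A $$ (i, l) * \<bar>w $ l\<bar>)" if "i < k" for i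
  proof -
    have "x * w $ i = (x \<cdot>\<^sub>v w) $ i" using w that by simp
    also have "\<dots> = (A *\<^sub>v w) $ i" using w(3) by simp
    also have "\<dots> = (\<Sum>l<k. A $$ (i, l) * w $ l)"
      using w that by (intro index_mult_mat_vec_sum[OF carrier]) auto
    finally have "\<bar>x\<bar> * \<bar>w $ i\<bar> = \<bar>\<Sum>l<k. A $$ (i, l) * w $ l\<bar>" by (metis abs_mult)
    also have "\<dots> \<le> (\<Sum>l<k. \<bar>A $$ (i, l) * w $ l\<bar>)" by (rule sum_abs)
    also have "\<dots> = (\<Sum>l<k. A $$ (i, l) * \<bar>w $ l\<bar>)"
      using nonneg that by (intro sum.cong) (auto simp: abs_mult)
    finally show ?thesis .
  qed
  obtain i0 where i0: "i0 < k" "w $ i0 \<noteq> 0"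
    using w by (metis carrier_vecD eq_vecI index_zero_vec(1,2))
  define S where "S = (\<Sum>i<k. left_vec i * \<bar>w $ i\<bar>)"
  have "0 < S"
    unfolding S_def using i0 left_vec_pos left_vec_nonneg
    by (intro sum_pos2[where i = i0]) (auto intro: mult_nonneg_nonneg)
  have "\<bar>x\<bar> * S = (\<Sum>i<k. left_vec i * (\<bar>x\<bar> * \<bar>w $ i\<bar>))"
    unfolding S_def by (simp add: sum_distrib_left mult.left_commute)
  also have "\<dots> \<le> (\<Sum>i<k. left_vec i * (\<Sum>l<k. A $$ (i, l) * \<bar>w $ l\<bar>))"
    using abs_le left_vec_nonneg by (intro sum_mono mult_left_mono) auto
  also have "\<dots> = (\<Sum>i<k. \<Sum>l<k. left_vec i * A $$ (i, l) * \<bar>w $ l\<bar>)"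
    by (simp add: sum_distrib_left mult.assoc)
  also have "\<dots> = (\<Sum>l<k. \<Sum>i<k. left_vec i * A $$ (i, l) * \<bar>w $ l\<bar>)" by (rule sum.swap)
  also have "\<dots> = (\<Sum>l<k. perron_root * left_vec l * \<bar>w $ l\<bar>)"
    by (simp add: sum_distrib_right[symmetric] left_eigen)
  also have "\<dots> = perron_root * S" by (simp add: S_def sum_distrib_left mult.assoc)
  finally have "\<bar>x\<bar> \<le> perron_root" using \<open>0 < S\<close> by simp
  then show ?thesis by simp
qed

lemma perron_eigenvalue_eq: "perron_eigenvalue A = perron_root"
proof -
  have "{x. eigenvalue A x} = {x. poly (char_poly A) x = 0}"
    using eigenvalue_root_char_poly[OF carrier] by auto
  moreover have "char_poly A \<noteq> 0" using degree_monic_char_poly[OF carrier] by auto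
  ultimately have "finite {x. eigenvalue A x}" using poly_roots_finite by simp
  then show ?thesis unfolding perron_eigenvalue_def
    using eigenvalue_perron_root eigenvalue_le_perron_root by (intro Max_eqI) auto
qed

text \<open>Positive integral entries of \<open>A\<^sup>p\<close> are at least 1, so
  \<open>\<rho>\<^sup>p = (\<Sum>j l. left_vec l * P p l j) \<ge> k\<close>.\<close>

lemma perron_root_gt_one:
  assumes Nats: "\<forall>i<k. \<forall>j<k. A $$ (i, j) \<in> \<nat>" and "2 \<le> k"
  shows "1 < perron_root"
proof -
  obtain p where p: "0 < p" "\<And>i j. i < k \<Longrightarrow> j < k \<Longrightarrow> 0 < P p i j"
    using primitive_exponent by blast
  have one_le: "1 \<le> P p i j" if ij: "i < k" "j < k" for i j
  proof -
    obtain n where "P p i j = of_nat n"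
      using pow_mat_entries_Nats[OF carrier Nats ij] unfolding P_def by (auto elim: Nats_cases)
    then show ?thesis using p(2)[OF ij] by simp
  qed
  have "real k = (\<Sum>j<k. \<Sum>l<k. left_vec l)" using left_vec_sum by simp
  also have "\<dots> \<le> (\<Sum>j<k. \<Sum>l<k. left_vec l * P p l j)"
    using one_le left_vec_nonneg
    by (intro sum_mono) (metis lessThan_iff mult.right_neutral mult_left_mono)
  also have "\<dots> = perron_root ^ p"
    by (simp add: left_eigen_pow sum_distrib_left[symmetric] left_vec_sum)
  finally have "real k \<le> perron_root ^ p" .
  moreover have "2 \<le> real k" using assms(2) by simp
  ultimately have "2 \<le> perron_root ^ p" by linarith
  show ?thesis
  proof (rule ccontr)
    assume "\<not> 1 < perron_root"
    then have "perron_root ^ p \<le> 1" using perron_root_nonneg by (simp add: power_le_one)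
    then show False using \<open>2 \<le> perron_root ^ p\<close> by simp
  qed
qed

lemma P_total_tendsto:
  assumes "i < k" "j < k"
  shows "(\<lambda>n. P n i j / total n) \<longlonglongrightarrow> right_vec i * left_vec j"
proof -
  have "(\<lambda>n. row_sum n i / total n * (P n i j / row_sum n i)) \<longlonglongrightarrow> right_vec i * left_vec j"
    by (intro tendsto_mult row_sum_total_tendsto P_row_sum_tendsto assms)
  moreover have "row_sum n i / total n * (P n i j / row_sum n i) = P n i j / total n" for n
    using row_sum_pos[OF assms(1), of n] by simp
  ultimately show ?thesis by simp
qed

lemma total_shift_tendsto: "(\<lambda>n. total (n + s) / total n) \<longlonglongrightarrow> perron_root ^ s"
proof (induction s)
  case 0
  show ?case using total_pos by (simp add: less_imp_neq[symmetric])
next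
  case (Suc s)
  have "(\<lambda>n. total (Suc (n + s)) / total (n + s) * (total (n + s) / total n))
      \<longlonglongrightarrow> perron_root * perron_root ^ s"
    by (intro tendsto_mult LIMSEQ_ignore_initial_segment[OF total_ratio_tendsto] Suc.IH)
  moreover have "(\<lambda>n. total (Suc (n + s)) / total (n + s) * (total (n + s) / total n))
      = (\<lambda>n. total (n + Suc s) / total n)"
    using total_pos by (intro ext) (simp add: less_imp_neq[symmetric])
  ultimately show ?case by simp
qed

lemma total_shift_inverse_tendsto: "(\<lambda>n. total n / total (n + s)) \<longlonglongrightarrow> 1 / perron_root ^ s"
proof -
  have "(\<lambda>n. 1 / (total (n + s) / total n)) \<longlonglongrightarrow> 1 / perron_root ^ s"
    using perron_root_pos by (intro tendsto_divide tendsto_const total_shift_tendsto) simp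
  then show ?thesis by simp
qed

lemma left_vec_row_sum: "(\<Sum>j<k. left_vec j * row_sum t j) = perron_root ^ t"
proof -
  have "(\<Sum>j<k. left_vec j * row_sum t j) = (\<Sum>j<k. \<Sum>l<k. left_vec j * P t j l)"
    by (simp add: row_sum_def sum_distrib_left)
  also have "\<dots> = (\<Sum>l<k. \<Sum>j<k. left_vec j * P t j l)" by (rule sum.swap)
  also have "\<dots> = perron_root ^ t"
    by (simp add: left_eigen_pow sum_distrib_left[symmetric] left_vec_sum)
  finally show ?thesis .
qed

section \<open>Growth of the semiballs\<close>

lemma total_nonzero: "total n \<noteq> 0"
  using total_pos[of n] by simp

text \<open>For a 0/1 matrix, \<open>cum_row_sum i n\<close> is the size of the \<open>n\<close>-semiball at \<open>s\<^sub>i\<close>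
  (\<open>card_semiball\<close>).\<close>

definition cum_row_sum :: "nat \<Rightarrow> nat \<Rightarrow> real" where
  "cum_row_sum i n = (\<Sum>t\<le>n. row_sum t i)"

lemma left_vec_cum_row_sum:
  assumes "perron_root \<noteq> 1"
  shows "(\<Sum>j<k. left_vec j * cum_row_sum j m) = (perron_root ^ (m + 1) - 1) / (perron_root - 1)"
proof -
  have "(\<Sum>j<k. left_vec j * cum_row_sum j m) = (\<Sum>j<k. \<Sum>t\<le>m. left_vec j * row_sum t j)"
    by (simp add: cum_row_sum_def sum_distrib_left)
  also have "\<dots> = (\<Sum>t\<le>m. \<Sum>j<k. left_vec j * row_sum t j)" by (rule sum.swap)
  also have "\<dots> = (\<Sum>t<Suc m. perron_root ^ t)" by (simp add: left_vec_row_sum lessThan_Suc_atMost)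
  also have "\<dots> = (perron_root ^ (m + 1) - 1) / (perron_root - 1)"
  proof -
    have "1 - perron_root \<noteq> 0" "perron_root - 1 \<noteq> 0" using assms by auto
    then show ?thesis using assms by (simp add: sum_gp_strict field_simps)
  qed
  finally show ?thesis .
qed

context
  assumes perron_root_gt_1: "1 < perron_root"
begin

lemma cum_row_sum_total_tendsto:
  assumes "i < k"
  shows "(\<lambda>n. cum_row_sum i n / total n) \<longlonglongrightarrow> right_vec i * perron_root / (perron_root - 1)"
proof -
  have rec: "cum_row_sum i (Suc n) / total (Suc n)
      = total n / total (Suc n) * (cum_row_sum i n / total n) + row_sum (Suc n) i / total (Suc n)"
    for n
    using total_nonzero[of n] by (simp add: cum_row_sum_def add_divide_distrib)
  have \<alpha>: "(\<lambda>n. total n / total (Suc n)) \<longlonglongrightarrow> 1 / perron_root"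
    using total_shift_inverse_tendsto[of 1] by simp
  have \<beta>: "(\<lambda>n. row_sum (Suc n) i / total (Suc n)) \<longlonglongrightarrow> right_vec i"
    by (rule LIMSEQ_Suc[OF row_sum_total_tendsto[OF assms]])
  have "(\<lambda>n. cum_row_sum i n / total n) \<longlonglongrightarrow> right_vec i / (1 - 1 / perron_root)"
    by (rule tendsto_linear_recurrence[OF rec \<alpha> \<beta>]) (use perron_root_gt_1 in simp)
  moreover have "right_vec i / (1 - 1 / perron_root) = right_vec i * perron_root / (perron_root - 1)"
    using perron_root_gt_1 by (simp add: field_simps)
  ultimately show ?thesis by simp
qed

lemma cum_row_sum_ratio_tendsto:
  assumes "i < k" "l < k"
  shows "(\<lambda>n. cum_row_sum l n / cum_row_sum i (n + s))
    \<longlonglongrightarrow> right_vec l / (right_vec i * perron_root ^ s)"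
proof -
  define c where "c = perron_root / (perron_root - 1)"
  have "0 < c" using perron_root_gt_1 by (simp add: c_def)
  have lim_l: "(\<lambda>n. cum_row_sum l n / total n) \<longlonglongrightarrow> right_vec l * c"
    using cum_row_sum_total_tendsto[OF assms(2)] by (simp add: c_def)
  have lim_i: "(\<lambda>n. cum_row_sum i (n + s) / total (n + s)) \<longlonglongrightarrow> right_vec i * c"
    using LIMSEQ_ignore_initial_segment[OF cum_row_sum_total_tendsto[OF assms(1)], of s]
    by (simp add: c_def)
  have "(\<lambda>n. (cum_row_sum l n / total n)
      / (cum_row_sum i (n + s) / total (n + s) * (total (n + s) / total n)))
      \<longlonglongrightarrow> (right_vec l * c) / (right_vec i * c * perron_root ^ s)"
    using right_vec_pos[OF assms(1)] \<open>0 < c\<close> perron_root_pos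
    by (intro tendsto_divide tendsto_mult lim_l lim_i total_shift_tendsto) simp
  moreover have "(\<lambda>n. (cum_row_sum l n / total n)
      / (cum_row_sum i (n + s) / total (n + s) * (total (n + s) / total n)))
      = (\<lambda>n. cum_row_sum l n / cum_row_sum i (n + s))"
    using total_nonzero by (intro ext) simp
  moreover have "(right_vec l * c) / (right_vec i * c * perron_root ^ s)
      = right_vec l / (right_vec i * perron_root ^ s)"
    using \<open>0 < c\<close> by simp
  ultimately show ?thesis by simp
qed

lemma sum_lim_cum_row_sum_ratio:
  assumes "i < k"
  shows "(\<Sum>l<k. lim (\<lambda>n. P s i l * cum_row_sum l n / cum_row_sum i (n + s))) = 1"
proof -
  have "lim (\<lambda>n. P s i l * cum_row_sum l n / cum_row_sum i (n + s))
      = P s i l * right_vec l / (right_vec i * perron_root ^ s)" if "l < k" for l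
    using tendsto_mult_left[OF cum_row_sum_ratio_tendsto[OF assms that], of "P s i l"]
    by (intro limI) simp
  then have "(\<Sum>l<k. lim (\<lambda>n. P s i l * cum_row_sum l n / cum_row_sum i (n + s)))
      = (\<Sum>l<k. P s i l * right_vec l) / (right_vec i * perron_root ^ s)"
    by (simp add: sum_divide_distrib)
  also have "\<dots> = 1"
    using right_vec_pos[OF assms] perron_root_pos by (simp add: right_eigen_pow assms)
  finally show ?thesis .
qed

lemma P_shifted_total_tendsto:
  assumes "i < k" "j < k"
  shows "(\<lambda>n. P n i j / total (n + m)) \<longlonglongrightarrow> right_vec i * left_vec j / perron_root ^ m"
proof -
  have "(\<lambda>n. P n i j / total n * (total n / total (n + m)))
      \<longlonglongrightarrow> right_vec i * left_vec j * (1 / perron_root ^ m)"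
    by (intro tendsto_mult P_total_tendsto assms total_shift_inverse_tendsto)
  moreover have "(\<lambda>n. P n i j / total n * (total n / total (n + m))) = (\<lambda>n. P n i j / total (n + m))"
    using total_nonzero by (intro ext) simp
  ultimately show ?thesis by simp
qed

text \<open>Normalised by the total mass, the window sums satisfy a linear recurrence whose
  coefficient tends to \<open>1 / \<rho>\<^sup>m\<^sup>+\<^sup>1\<close>.\<close>

lemma window_sum_total_tendsto:
  assumes "i < k" "j < k"
  shows "(\<lambda>q. (\<Sum>l<q. P (r + l * (m + 1) + 1) i j) / total (q * (m + 1) + r))
    \<longlonglongrightarrow> right_vec i * left_vec j / perron_root ^ m / (1 - 1 / perron_root ^ (m + 1))"
proof -
  define h where "h = m + 1"
  define N where "N q = (\<Sum>l<q. P (r + l * h + 1) i j)" for q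
  have rec: "N (Suc q) / total (Suc q * h + r)
      = total (q * h + r) / total (q * h + r + h) * (N q / total (q * h + r))
        + P (q * h + (r + 1)) i j / total (q * h + (r + 1) + m)" for q
  proof -
    have "N (Suc q) = N q + P (q * h + (r + 1)) i j" by (simp add: N_def add.commute)
    moreover have "Suc q * h + r = q * h + r + h" "q * h + (r + 1) + m = q * h + r + h"
      by (simp_all add: h_def)
    ultimately show ?thesis
      using total_nonzero[of "q * h + r"] by (simp only:) (simp add: add_divide_distrib)
  qed
  have \<alpha>: "(\<lambda>q. total (q * h + r) / total (q * h + r + h)) \<longlonglongrightarrow> 1 / perron_root ^ h"
    using LIMSEQ_arith_subseq[OF total_shift_inverse_tendsto[of h], of h r]
    by (simp add: h_def add.assoc)
  have \<beta>: "(\<lambda>q. P (q * h + (r + 1)) i j / total (q * h + (r + 1) + m))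
      \<longlonglongrightarrow> right_vec i * left_vec j / perron_root ^ m"
    by (rule LIMSEQ_arith_subseq[OF P_shifted_total_tendsto[OF assms]]) (simp add: h_def)
  have "1 < perron_root ^ h" by (rule one_less_power[OF perron_root_gt_1]) (simp add: h_def)
  then have "\<bar>1 / perron_root ^ h\<bar> < 1" by simp
  from tendsto_linear_recurrence[OF rec \<alpha> \<beta> this] show ?thesis by (simp add: N_def h_def)
qed

lemma window_sum_tendsto:
  assumes "i < k" "j < k"
  shows "(\<lambda>q. (\<Sum>l<q. P (r + l * (m + 1) + 1) i j) / cum_row_sum i (q * (m + 1) + r))
    \<longlonglongrightarrow> left_vec j * (perron_root - 1) / (perron_root ^ (m + 1) - 1)"
proof -
  let ?N = "\<lambda>q. \<Sum>l<q. P (r + l * (m + 1) + 1) i j" and ?n = "\<lambda>q. q * (m + 1) + r"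
  have cum_lim: "(\<lambda>q. cum_row_sum i (?n q) / total (?n q))
      \<longlonglongrightarrow> right_vec i * perron_root / (perron_root - 1)"
    by (rule LIMSEQ_arith_subseq[OF cum_row_sum_total_tendsto[OF assms(1)]]) simp
  have "(\<lambda>q. (?N q / total (?n q)) / (cum_row_sum i (?n q) / total (?n q)))
      \<longlonglongrightarrow> (right_vec i * left_vec j / perron_root ^ m / (1 - 1 / perron_root ^ (m + 1)))
        / (right_vec i * perron_root / (perron_root - 1))"
    using right_vec_pos[OF assms(1)] perron_root_gt_1
    by (intro tendsto_divide window_sum_total_tendsto assms cum_lim) simp
  moreover have "(\<lambda>q. (?N q / total (?n q)) / (cum_row_sum i (?n q) / total (?n q)))
      = (\<lambda>q. ?N q / cum_row_sum i (?n q))"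
    using total_nonzero by (intro ext) simp
  moreover have "(right_vec i * left_vec j / perron_root ^ m / (1 - 1 / perron_root ^ (m + 1)))
        / (right_vec i * perron_root / (perron_root - 1))
      = left_vec j * (perron_root - 1) / (perron_root ^ (m + 1) - 1)"
  proof -
    have "0 < perron_root ^ m" "1 < perron_root * perron_root ^ m"
      using perron_root_gt_1 one_less_power[OF perron_root_gt_1, of "Suc m"] by simp_all
    then show ?thesis using right_vec_pos[OF assms(1)] perron_root_gt_1 by (simp add: field_simps)
  qed
  ultimately show ?thesis by simp
qed

lemma sum_lim_window_sums:
  assumes "i < k"
  shows "(\<Sum>j<k. lim (\<lambda>q. (\<Sum>l<q. P (r + l * (m + 1) + 1) i j) * cum_row_sum j m
      / cum_row_sum i (q * (m + 1) + r))) = 1"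
proof -
  let ?c = "(perron_root - 1) / (perron_root ^ (m + 1) - 1)"
  have "lim (\<lambda>q. (\<Sum>l<q. P (r + l * (m + 1) + 1) i j) * cum_row_sum j m
      / cum_row_sum i (q * (m + 1) + r)) = ?c * (left_vec j * cum_row_sum j m)" if "j < k" for j
  proof (rule limI)
    have "(\<lambda>q. cum_row_sum j m * ((\<Sum>l<q. P (r + l * (m + 1) + 1) i j)
        / cum_row_sum i (q * (m + 1) + r)))
        \<longlonglongrightarrow> cum_row_sum j m * (left_vec j * (perron_root - 1) / (perron_root ^ (m + 1) - 1))"
      by (intro tendsto_mult_left window_sum_tendsto assms that)
    then show "(\<lambda>q. (\<Sum>l<q. P (r + l * (m + 1) + 1) i j) * cum_row_sum j m
        / cum_row_sum i (q * (m + 1) + r)) \<longlonglongrightarrow> ?c * (left_vec j * cum_row_sum j m)"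
      by (simp add: mult_ac)
  qed
  then have "(\<Sum>j<k. lim (\<lambda>q. (\<Sum>l<q. P (r + l * (m + 1) + 1) i j) * cum_row_sum j m
      / cum_row_sum i (q * (m + 1) + r))) = ?c * (\<Sum>j<k. left_vec j * cum_row_sum j m)"
    by (simp add: sum_distrib_left)
  also have "\<dots> = 1"
  proof -
    have "1 < perron_root ^ (m + 1)" by (rule one_less_power[OF perron_root_gt_1]) simp
    then show ?thesis using perron_root_gt_1 by (simp add: left_vec_cum_row_sum)
  qed
  finally show ?thesis .
qed

end

end

lemma primitive_mat_imp_primitive_matrix:
  assumes K: "K \<in> carrier_mat k k" and "2 \<le> k" and "primitive_mat K"
  shows "primitive_matrix K k"
proof
  obtain p where p: "\<forall>a<k. \<forall>b<k. 0 < (K ^\<^sub>m p) $$ (a, b)"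
    using \<open>primitive_mat K\<close> K unfolding primitive_mat_def by auto
  have "p \<noteq> 0"
  proof
    assume "p = 0"
    then have "(K ^\<^sub>m p) $$ (0, 1) = 0" using K \<open>2 \<le> k\<close> by simp
    moreover have "0 < (K ^\<^sub>m p) $$ (0, 1)" using p \<open>2 \<le> k\<close> by simp
    ultimately show False by simp
  qed
  then show "\<exists>p>0. \<forall>i<k. \<forall>j<k. 0 < (K ^\<^sub>m p) $$ (i, j)" using p by blast
  show "0 \<le> K $$ (i, j)" if "i < k" "j < k" for i j
    using \<open>primitive_mat K\<close> K that unfolding primitive_mat_def by auto
qed (use assms in auto)

theorem lemma3p5:
  fixes K :: "real mat" and k m i j :: nat
  defines "lam \<equiv> perron_eigenvalue K"
    and "D \<equiv> (\<lambda>a n. real (card (semiball K [a] n)))"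
  assumes "K \<in> carrier_mat k k"
    and "k \<ge> 2"
    and "\<forall>a<k. \<forall>b<k. K $$ (a,b) \<in> {0,1}"
    and "primitive_mat K"
    and "i < k" and "j < k"
  shows
   "((\<exists>L>0. (\<lambda>n. D j n / D i (n + m + 1)) \<longlonglongrightarrow> L) \<and>
    (\<Sum>l<k. lim (\<lambda>n. (K ^\<^sub>m (m+1)) $$ (i,l) * D l n / D i (n + m + 1))) = 1) \<and>
   (\<exists>\<gamma>>0. \<forall>r. (\<lambda>q. (\<Sum>l<q. (K ^\<^sub>m (r + l*(m+1) + 1)) $$ (i,j)) / D i (q*(m+1) + r))
              \<longlonglongrightarrow> \<gamma> / (lam ^ (m+1) - 1)) \<and>
   (\<forall>r. (\<Sum>j'<k. lim (\<lambda>q. (\<Sum>l<q. (K ^\<^sub>m (r + l*(m+1) + 1)) $$ (i,j')) * D j' m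
                              / D i (q*(m+1) + r))) = 1)"
proof -
  interpret primitive_matrix K k
    using assms(3,4,6) by (rule primitive_mat_imp_primitive_matrix)
  have "\<forall>a<k. \<forall>b<k. K $$ (a, b) \<in> \<nat>"
    using assms(5) by (metis Nats_0 Nats_1 empty_iff insert_iff)
  then have gt1: "1 < perron_root" using assms(4) by (rule perron_root_gt_one)
  have D: "D a n = cum_row_sum a n" if "a < k" for a n
    using card_semiball[OF assms(3,5) that] by (simp add: D_def cum_row_sum_def row_sum_def P_def)
  have lam: "lam = perron_root" unfolding lam_def by (rule perron_eigenvalue_eq)
  note i = \<open>i < k\<close> and j = \<open>j < k\<close>
  have "(\<lambda>n. D j n / D i (n + m + 1)) \<longlonglongrightarrow> right_vec j / (right_vec i * perron_root ^ (m + 1))"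
    using cum_row_sum_ratio_tendsto[OF gt1 i j, of "m + 1"] i j by (simp add: D)
  moreover have "0 < right_vec j / (right_vec i * perron_root ^ (m + 1))"
    using right_vec_pos i j perron_root_pos by simp
  moreover have "(\<Sum>l<k. lim (\<lambda>n. (K ^\<^sub>m (m+1)) $$ (i,l) * D l n / D i (n + m + 1))) = 1"
    using sum_lim_cum_row_sum_ratio[OF gt1 i, of "m + 1"] i by (simp add: D P_def)
  moreover have "(\<lambda>q. (\<Sum>l<q. (K ^\<^sub>m (r + l*(m+1) + 1)) $$ (i,j)) / D i (q*(m+1) + r))
      \<longlonglongrightarrow> left_vec j * (lam - 1) / (lam ^ (m+1) - 1)" for r
    using window_sum_tendsto[OF gt1 i j, of r m] i by (simp add: D P_def lam)
  moreover have "0 < left_vec j * (lam - 1)" using left_vec_pos[OF j] gt1 by (simp add: lam)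
  moreover have "(\<Sum>j'<k. lim (\<lambda>q. (\<Sum>l<q. (K ^\<^sub>m (r + l*(m+1) + 1)) $$ (i,j')) * D j' m
      / D i (q*(m+1) + r))) = 1" for r
    using sum_lim_window_sums[OF gt1 i, of r m] i by (simp add: D P_def)
  ultimately show ?thesis by blast
qed

end
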